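(* Let $\rho:\pi^*\to\mathbf U_n$ be a homomorphism and $\gamma\in\mathbf{SU}_n$, written up to conjugacy as $\gamma=\mathrm{diag}(e^{2\pi i\gamma_1},\dots,e^{2\pi i\gamma_n})$ with $0\le\gamma_j<1$. Then $\gamma$ is conjugate to $\widetilde\Psi(\rho)$ for some reducible $\rho$ if and only if there is a proper nonempty subcollection $\gamma_{\sigma(1)},\dots,\gamma_{\sigma(n_1)}$ ($1\le n_1<n$) with $\sum_{j=1}^{n_1}\gamma_{\sigma(j)}\in\mathbb Z$. Consequently, the set of critical values of $\Psi$ in $W=\mathbf{SU}_n/\mathrm{Ad}$ is a union of hyperplanes.
   Context: $F^*$ is a compact surface of genus $g\ge1$ with one boundary component, $\pi^*=\pi_1F^*$ free on $a_1,b_1,\dots,a_g,b_g$. $\widetilde\Psi:\mathrm{Hom}(\pi^*,\mathbf U_n)\cong\mathbf U_n^{2g}\to\mathbf{SU}_n$ is $\widetilde\Psi(A_1,B_1,\dots,A_g,B_g)=\prod_{i=1}^g[A_i,B_i]$, and $\Psi$ is the induced map on conjugacy classes. A representation $\rho$ is reducible if $\mathbb C^n$ has a proper nonzero $\rho(\pi^* )$-invariant subspace (equivalently, up to conjugacy $\mathrm{im}\rho\subset\mathbf U_{n_1}\times\mathbf U_{n_2}$ with $n_1+n_2=n$, $n_i\ge1$). The critical points of $\widetilde\Psi$ are exactly the reducible representations, and the critical values of $\Psi$ are the images of these. *)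

theory Defs
  imports "HOL-Analysis.Analysis"
begin

text \<open>n x n complex matrices are indexed by a finite type 'n, with n = CARD('n).\<close>

definition adjoint_mat :: "complex^'n^'n \<Rightarrow> complex^'n^'n" where
  "adjoint_mat U = (\<chi> i j. cnj (U $ j $ i))"

definition unitary_mat :: "complex^'n^'n \<Rightarrow> bool" where
  "unitary_mat U \<longleftrightarrow> U ** adjoint_mat U = mat 1 \<and> adjoint_mat U ** U = mat 1"

definition special_unitary_mat :: "complex^'n^'n \<Rightarrow> bool" where
  "special_unitary_mat U \<longleftrightarrow> unitary_mat U \<and> det U = 1"

definition unitarily_conjugate :: "complex^'n^'n \<Rightarrow> complex^'n^'n \<Rightarrow> bool" where
  "unitarily_conjugate X Y \<longleftrightarrow> (\<exists>P. unitary_mat P \<and> X = P ** Y ** adjoint_mat P)"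

text \<open>Group commutator [A,B] = A B A^{-1} B^{-1} (for unitary matrices the inverse is the adjoint).\<close>
definition commutator_mat :: "complex^'n^'n \<Rightarrow> complex^'n^'n \<Rightarrow> complex^'n^'n" where
  "commutator_mat A B = A ** B ** adjoint_mat A ** adjoint_mat B"

text \<open>Psi-tilde: ordered product [A_1,B_1] ... [A_g,B_g] (indices shifted to 0..g-1).\<close>
fun prod_commutators :: "nat \<Rightarrow> (nat \<Rightarrow> complex^'n^'n) \<Rightarrow> (nat \<Rightarrow> complex^'n^'n) \<Rightarrow> complex^'n^'n" where
  "prod_commutators 0 A B = mat 1"
| "prod_commutators (Suc k) A B = prod_commutators k A B ** commutator_mat (A k) (B k)"

text \<open>A homomorphism pi^* -> U_n: images of the free generators a_i, b_i (i < g).\<close>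
definition is_rep :: "nat \<Rightarrow> (nat \<Rightarrow> complex^'n^'n) \<Rightarrow> (nat \<Rightarrow> complex^'n^'n) \<Rightarrow> bool" where
  "is_rep g A B \<longleftrightarrow> (\<forall>i<g. unitary_mat (A i) \<and> unitary_mat (B i))"

definition complex_subspace :: "(complex^'n) set \<Rightarrow> bool" where
  "complex_subspace V \<longleftrightarrow> 0 \<in> V \<and> (\<forall>x\<in>V. \<forall>y\<in>V. x + y \<in> V) \<and> (\<forall>c. \<forall>x\<in>V. c *s x \<in> V)"

text \<open>Reducible: a proper nonzero subspace invariant under the image of pi^* (generated by the A_i, B_i).\<close>
definition reducible_rep :: "nat \<Rightarrow> (nat \<Rightarrow> complex^'n^'n) \<Rightarrow> (nat \<Rightarrow> complex^'n^'n) \<Rightarrow> bool" where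
  "reducible_rep g A B \<longleftrightarrow> (\<exists>V. complex_subspace V \<and> V \<noteq> {0} \<and> V \<noteq> UNIV \<and>
      (\<forall>i<g. \<forall>x\<in>V. A i *v x \<in> V \<and> B i *v x \<in> V))"

definition diag_exp :: "('n \<Rightarrow> real) \<Rightarrow> complex^'n^'n" where
  "diag_exp t = (\<chi> i j. if i = j then exp (2 * of_real pi * \<i> * of_real (t i)) else 0)"

end

theory Submission
  imports Defs "HOL-Combinatorics.Cycles" "HOL-Library.Real_Mod"
begin

(* If a proper subspace W is invariant under all A_i, B_i, the determinant of the restriction
   to W is multiplicative on matrices preserving W and hence equals 1 on every commutator and on
   their product. Conjugating so that the product is diag(exp(2 pi i t_j)) and computing the
   restricted determinant through a projection onto W along coordinate axes outside a set S of
   coordinates, it becomes the product of exp(2 pi i t_j) over j in S; so the sum of the t_j over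
   S is an integer.
   Conversely, the sums over S and over its complement are integers (the latter because the
   determinant is 1). A cyclic permutation p of S and of its complement and phases d_j with
   d_j / d_(p j) = exp(2 pi i t_j) make the commutator of diag(d) and the permutation matrix of p
   equal to diag(exp(2 pi i t_j)); both preserve the coordinate subspace of S, so one handle
   carrying them, all others trivial, is a reducible representation. *)

section \<open>Unitary conjugation\<close>

lemma adjoint_mat_mult: "adjoint_mat (X ** Y) = adjoint_mat Y ** adjoint_mat (X :: complex^'n^'n)"
  by (simp add: adjoint_mat_def matrix_matrix_mult_def vec_eq_iff mult.commute)

lemma adjoint_mat_adjoint_mat [simp]: "adjoint_mat (adjoint_mat X) = X"
  by (simp add: adjoint_mat_def vec_eq_iff)

lemma adjoint_mat_one [simp]: "adjoint_mat (mat 1 :: complex^'n^'n) = mat 1"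
  by (simp add: adjoint_mat_def mat_def vec_eq_iff)

lemma unitary_mat_one: "unitary_mat (mat 1 :: complex^'n^'n)"
  by (simp add: unitary_mat_def)

lemma unitary_mat_adjoint_mat: "unitary_mat U \<Longrightarrow> unitary_mat (adjoint_mat U)"
  by (simp add: unitary_mat_def)

lemma unitary_mat_cancel:
  assumes "unitary_mat U"
  shows "adjoint_mat U ** (U ** X) = X" "U ** (adjoint_mat U ** X) = X"
    and "adjoint_mat U *v (U *v x) = x" "U *v (adjoint_mat U *v x) = x"
  using assms by (simp_all add: unitary_mat_def matrix_mul_assoc matrix_vector_mul_assoc)

lemma unitary_mat_mult: "unitary_mat U \<Longrightarrow> unitary_mat V \<Longrightarrow> unitary_mat (U ** V)"
  unfolding unitary_mat_def adjoint_mat_mult by (metis matrix_mul_assoc matrix_mul_lid)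

lemma unitary_mat_inj: "unitary_mat U \<Longrightarrow> inj ((*v) U)"
  by (metis injI unitary_mat_cancel(3))

lemma det_unitary_conj:
  assumes "unitary_mat U"
  shows "det (U ** X ** adjoint_mat U) = det X"
proof -
  have "det U * det (adjoint_mat U) = 1"
    using assms by (metis det_I det_mul unitary_mat_def)
  moreover have "det (U ** X ** adjoint_mat U) = det X * (det U * det (adjoint_mat U))"
    by (simp add: det_mul mult_ac)
  ultimately show ?thesis by simp
qed

lemma unitarily_conjugate_common:
  assumes "unitarily_conjugate Z X" "unitarily_conjugate Z Y"
  shows "\<exists>R. unitary_mat R \<and> Y = R ** X ** adjoint_mat R"
proof -
  obtain P Q where P: "unitary_mat P" "Z = P ** X ** adjoint_mat P"
    and Q: "unitary_mat Q" "Z = Q ** Y ** adjoint_mat Q"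
    using assms unfolding unitarily_conjugate_def by blast
  have "Y = adjoint_mat Q ** Z ** Q"
  proof -
    have "adjoint_mat Q ** Z ** Q = adjoint_mat Q ** (Q ** (Y ** (adjoint_mat Q ** Q)))"
      using Q(2) by (simp add: matrix_mul_assoc)
    then show ?thesis
      using Q(1) by (simp add: unitary_mat_cancel unitary_mat_def)
  qed
  also have "\<dots> = (adjoint_mat Q ** P) ** X ** adjoint_mat (adjoint_mat Q ** P)"
    using P(2) by (simp add: adjoint_mat_mult matrix_mul_assoc)
  finally show ?thesis
    using P(1) Q(1) by (blast intro: unitary_mat_mult unitary_mat_adjoint_mat)
qed

lemma complex_subspace_iff_subspace: "complex_subspace V \<longleftrightarrow> vec.subspace V"
  by (simp add: complex_subspace_def vec.subspace_def)

lemma commutator_mat_unitary_conj: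
  assumes "unitary_mat R"
  shows "commutator_mat (R ** A ** adjoint_mat R) (R ** B ** adjoint_mat R)
    = R ** commutator_mat A B ** adjoint_mat R"
  using assms
  by (simp add: commutator_mat_def adjoint_mat_mult matrix_mul_assoc [symmetric] unitary_mat_cancel)

lemma prod_commutators_unitary_conj:
  assumes "unitary_mat R"
  shows "prod_commutators k (\<lambda>i. R ** A i ** adjoint_mat R) (\<lambda>i. R ** B i ** adjoint_mat R)
    = R ** prod_commutators k A B ** adjoint_mat R"
proof (induction k)
  case 0
  then show ?case using assms by (simp add: unitary_mat_def)
next
  case (Suc k)
  have "prod_commutators (Suc k) (\<lambda>i. R ** A i ** adjoint_mat R) (\<lambda>i. R ** B i ** adjoint_mat R)
      = (R ** prod_commutators k A B ** adjoint_mat R) ** (R ** commutator_mat (A k) (B k) ** adjoint_mat R)"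
    by (simp add: Suc.IH commutator_mat_unitary_conj [OF assms])
  also have "\<dots> = R ** prod_commutators (Suc k) A B ** adjoint_mat R"
    by (simp add: matrix_mul_assoc [symmetric] unitary_mat_cancel [OF assms])
  finally show ?case .
qed

lemma is_rep_unitary_conj:
  "unitary_mat R \<Longrightarrow> is_rep g A B
    \<Longrightarrow> is_rep g (\<lambda>i. R ** A i ** adjoint_mat R) (\<lambda>i. R ** B i ** adjoint_mat R)"
  by (simp add: is_rep_def unitary_mat_mult unitary_mat_adjoint_mat)

lemma reducible_rep_unitary_conj:
  assumes R: "unitary_mat R" and "reducible_rep g A B"
  shows "reducible_rep g (\<lambda>i. R ** A i ** adjoint_mat R) (\<lambda>i. R ** B i ** adjoint_mat R)"
proof -
  obtain V where V: "complex_subspace V" "V \<noteq> {0}" "V \<noteq> UNIV"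
    and inv: "\<forall>i<g. \<forall>x\<in>V. A i *v x \<in> V \<and> B i *v x \<in> V"
    using assms(2) unfolding reducible_rep_def by blast
  define V' where "V' = (*v) R ` V"
  have inj: "inj ((*v) R)" using unitary_mat_inj[OF R] .
  have "complex_subspace V'"
    using V(1) by (simp add: V'_def complex_subspace_iff_subspace vec.subspace_image)
  moreover have "V' \<noteq> {0}"
  proof -
    obtain v where "v \<in> V" "v \<noteq> 0"
      using V(1,2) unfolding complex_subspace_def by blast
    moreover from \<open>v \<noteq> 0\<close> have "R *v v \<noteq> 0"
      using inj by (metis injD matrix_vector_mult_0_right)
    ultimately show ?thesis
      unfolding V'_def by blast
  qed
  moreover have "V' \<noteq> UNIV"
  proof -
    obtain x where "x \<notin> V" using V(3) by blast
    then have "R *v x \<notin> V'"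
      unfolding V'_def using inj by (simp add: inj_image_mem_iff)
    then show ?thesis by blast
  qed
  moreover have "\<forall>i<g. \<forall>y\<in>V'. (R ** A i ** adjoint_mat R) *v y \<in> V'
      \<and> (R ** B i ** adjoint_mat R) *v y \<in> V'"
    using inv by (auto simp: V'_def matrix_vector_mul_assoc [symmetric] unitary_mat_cancel [OF R])
  ultimately show ?thesis
    unfolding reducible_rep_def by blast
qed

section \<open>Diagonal and permutation matrices\<close>

definition diag_mat :: "('n \<Rightarrow> 'a::zero) \<Rightarrow> 'a^'n^'n" where
  "diag_mat d = (\<chi> i j. if i = j then d i else 0)"

definition perm_mat :: "('n \<Rightarrow> 'n) \<Rightarrow> 'a::{zero,one}^'n^'n" where
  "perm_mat p = (\<chi> i j. if j = p i then 1 else 0)"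

lemma diag_mat_mult_vec: "diag_mat d *v x = (\<chi> i. d i * x$i)"
  by (simp add: diag_mat_def matrix_vector_mult_def vec_eq_iff if_distrib [of "\<lambda>a. a * _"]
      sum.delta cong: if_cong)

lemma perm_mat_mult_vec: "perm_mat p *v x = (\<chi> i. x$(p i))"
  by (simp add: perm_mat_def matrix_vector_mult_def vec_eq_iff if_distrib [of "\<lambda>a. a * _"]
      sum.delta' cong: if_cong)

lemma adjoint_diag_mat: "adjoint_mat (diag_mat d) = diag_mat (\<lambda>i. cnj (d i))"
  by (simp add: adjoint_mat_def diag_mat_def vec_eq_iff)

lemma adjoint_perm_mat: "bij p \<Longrightarrow> adjoint_mat (perm_mat p) = perm_mat (inv p)"
  by (auto simp: adjoint_mat_def perm_mat_def vec_eq_iff bij_inv_eq_iff)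

lemma unitary_diag_mat:
  assumes "\<And>i. norm (d i) = 1"
  shows "unitary_mat (diag_mat d)"
proof -
  have "d i * cnj (d i) = 1" for i
    using assms complex_norm_square [of "d i"] by simp
  then have cancel: "d i * (cnj (d i) * y) = y" "cnj (d i) * (d i * y) = y" for i y
    by (simp_all add: mult.assoc [symmetric] mult.commute [of "cnj _"])
  show ?thesis
    by (simp add: unitary_mat_def matrix_eq adjoint_diag_mat diag_mat_mult_vec cancel
        flip: matrix_vector_mul_assoc)
qed

lemma unitary_perm_mat: "bij p \<Longrightarrow> unitary_mat (perm_mat p)"
  by (simp add: unitary_mat_def matrix_eq adjoint_perm_mat perm_mat_mult_vec bij_is_inj bij_is_surj
      surj_f_inv_f flip: matrix_vector_mul_assoc)

lemma commutator_diag_perm_mat: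
  assumes "bij p"
  shows "commutator_mat (diag_mat d) (perm_mat p) = diag_mat (\<lambda>i. d i * cnj (d (p i)))"
  using assms
  by (simp add: commutator_mat_def matrix_eq adjoint_diag_mat adjoint_perm_mat diag_mat_mult_vec
      perm_mat_mult_vec bij_is_inj mult.assoc flip: matrix_vector_mul_assoc)

lemma exp_2pi_eq_cis: "exp (2 * of_real pi * \<i> * of_real x) = cis (2 * pi * x)"
  by (simp add: cis_conv_exp mult_ac)

lemma diag_exp_eq_diag_mat: "diag_exp t = diag_mat (\<lambda>j. cis (2 * pi * t j))"
  unfolding diag_exp_def diag_mat_def exp_2pi_eq_cis ..

lemma prod_cis: "(\<Prod>i\<in>A. cis (f i)) = cis (\<Sum>i\<in>A. f i)"
  by (induction A rule: infinite_finite_induct) (simp_all add: cis_mult)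

lemma cis_2pi_eq_1_iff: "cis (2 * pi * x) = 1 \<longleftrightarrow> x \<in> \<int>"
proof
  assume "cis (2 * pi * x) = 1"
  then obtain n :: int where "2 * pi * x = of_int n * (2 * pi)"
    by (auto simp: cis_eq_1_iff)
  then show "x \<in> \<int>" by simp
qed simp

lemma cis_2pi_eq_if_diff_in_Ints: "x - y \<in> \<int> \<Longrightarrow> cis (2 * pi * x) = cis (2 * pi * y)"
  by (metis cis_2pi_eq_1_iff cis_divide divide_eq_1_iff cis_neq_zero right_diff_distrib)

lemma sum_in_Ints_if_special_unitary_conj_diag_exp:
  assumes "special_unitary_mat \<gamma>" "unitarily_conjugate \<gamma> (diag_exp t)"
  shows "(\<Sum>j\<in>UNIV. t j) \<in> \<int>"
proof -
  have "det \<gamma> = det (diag_exp t)"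
    using assms(2) det_unitary_conj unfolding unitarily_conjugate_def by blast
  also have "\<dots> = cis (2 * pi * (\<Sum>j\<in>UNIV. t j))"
    by (simp add: diag_exp_eq_diag_mat diag_mat_def det_diagonal prod_cis sum_distrib_left)
  finally show ?thesis
    using assms(1) by (simp add: special_unitary_mat_def cis_2pi_eq_1_iff)
qed

section \<open>The determinant on an invariant subspace\<close>

definition preserves :: "'a::semiring_1^'n^'n \<Rightarrow> ('a^'n) set \<Rightarrow> bool" where
  "preserves X W \<longleftrightarrow> (\<forall>x\<in>W. X *v x \<in> W)"

definition projection_onto :: "'a::semiring_1^'n^'n \<Rightarrow> ('a^'n) set \<Rightarrow> bool" where
  "projection_onto P W \<longleftrightarrow> (\<forall>x. P *v x \<in> W) \<and> (\<forall>w\<in>W. P *v w = w)"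

lemma preserves_mult: "preserves X W \<Longrightarrow> preserves Y W \<Longrightarrow> preserves (X ** Y) W"
  by (simp add: preserves_def flip: matrix_vector_mul_assoc)

lemma preserves_inverse:
  fixes X Y :: "'a::field^'n^'n"
  assumes W: "vec.subspace W" and XY: "X ** Y = mat 1" "Y ** X = mat 1" and X: "preserves X W"
  shows "preserves Y W"
proof -
  have inj: "inj ((*v) X)"
    by (metis XY(2) injI matrix_vector_mul_assoc matrix_vector_mul_lid)
  have "vec.dim ((*v) X ` W) = vec.dim W"
    by (rule vec.dim_image_eq) (auto intro: inj_on_subset [OF inj] matrix_vector_mul_linear_gen)
  moreover have "(*v) X ` W \<subseteq> W"
    using X by (auto simp: preserves_def)
  ultimately have onto: "(*v) X ` W = W"
    using vec.subspace_dim_equal [OF vec.subspace_image [OF W] W] by simp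
  show ?thesis
    unfolding preserves_def
  proof
    fix x assume "x \<in> W"
    then obtain y where "y \<in> W" "x = X *v y" using onto by blast
    then show "Y *v x \<in> W"
      using XY(2) by (simp add: matrix_vector_mul_assoc)
  qed
qed

lemma preserves_adjoint_mat:
  "vec.subspace W \<Longrightarrow> unitary_mat U \<Longrightarrow> preserves U W \<Longrightarrow> preserves (adjoint_mat U) W"
  using preserves_inverse [of W U "adjoint_mat U"] by (simp add: unitary_mat_def)

lemma preserves_commutator_mat:
  assumes "vec.subspace W" "unitary_mat A" "unitary_mat B" "preserves A W" "preserves B W"
  shows "preserves (commutator_mat A B) W"
  using assms by (simp add: commutator_mat_def preserves_mult preserves_adjoint_mat)

text \<open>If \<open>P\<close> projects onto \<open>W\<close> and \<open>X\<close> preserves \<open>W\<close>, then \<open>X P + 1 - P\<close> acts as \<open>X\<close> on \<open>W\<close>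
  and as the identity modulo \<open>W\<close>, so its determinant is that of the restriction of \<open>X\<close> to \<open>W\<close>.\<close>
definition restricted_det :: "'a::comm_ring_1^'n^'n \<Rightarrow> 'a^'n^'n \<Rightarrow> 'a" where
  "restricted_det P X = det (X ** P + mat 1 - P)"

lemma restricted_det_one: "restricted_det P (mat 1) = 1"
  by (simp add: restricted_det_def)

lemma restricted_det_mult:
  assumes P: "projection_onto P W" and Y: "preserves Y W"
  shows "restricted_det P (X ** Y) = restricted_det P X * restricted_det P Y"
proof -
  have PP: "P *v (P *v v) = P *v v" for v
    using P by (simp add: projection_onto_def)
  have PYP: "P *v (Y *v (P *v v)) = Y *v (P *v v)" for v
    using P Y by (simp add: projection_onto_def preserves_def)
  have "(X ** P + mat 1 - P) ** (Y ** P + mat 1 - P) = X ** Y ** P + mat 1 - P"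
    by (simp add: matrix_eq matrix_vector_mul_assoc [symmetric] matrix_vector_mult_add_rdistrib
        matrix_vector_mult_diff_rdistrib matrix_vector_right_distrib matrix_vector_mult_diff_distrib
        PP PYP)
  then show ?thesis
    unfolding restricted_det_def by (metis det_mul)
qed

lemma restricted_det_commutator_mat:
  assumes W: "vec.subspace W" and P: "projection_onto P W"
    and A: "unitary_mat A" "preserves A W" and B: "unitary_mat B" "preserves B W"
  shows "restricted_det P (commutator_mat A B) = 1"
proof -
  have inverse: "restricted_det P U * restricted_det P (adjoint_mat U) = 1"
    if "unitary_mat U" "preserves U W" for U
    using that restricted_det_mult [OF P preserves_adjoint_mat [OF W that], of U]
    by (simp add: unitary_mat_def restricted_det_one)
  have "restricted_det P (commutator_mat A B)
      = (restricted_det P A * restricted_det P (adjoint_mat A))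
        * (restricted_det P B * restricted_det P (adjoint_mat B))"
    using A B W unfolding commutator_mat_def
    by (simp add: restricted_det_mult [OF P] preserves_mult preserves_adjoint_mat mult_ac)
  then show ?thesis
    using A B by (simp add: inverse)
qed

lemma restricted_det_prod_commutators:
  assumes W: "vec.subspace W" and P: "projection_onto P W"
    and AB: "\<forall>i<k. unitary_mat (A i) \<and> unitary_mat (B i) \<and> preserves (A i) W \<and> preserves (B i) W"
  shows "restricted_det P (prod_commutators k A B) = 1"
  using AB
proof (induction k)
  case 0
  then show ?case by (simp add: restricted_det_one)
next
  case (Suc k)
  then show ?case
    by (simp add: restricted_det_mult [OF P] preserves_commutator_mat [OF W]
        restricted_det_commutator_mat [OF W P])
qed

definition coords_determine :: "('a::zero^'n) set \<Rightarrow> 'n set \<Rightarrow> bool" where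
  "coords_determine W S \<longleftrightarrow> (\<forall>x\<in>W. (\<forall>j\<in>S. x$j = 0) \<longrightarrow> x = 0)"

text \<open>Together with \<open>projection_onto P W\<close>, this makes \<open>P\<close> the projection onto \<open>W\<close> along the
  coordinate axes outside \<open>S\<close>.\<close>
definition projection_along_coords :: "'n set \<Rightarrow> 'a::{zero,one}^'n^'n \<Rightarrow> bool" where
  "projection_along_coords S P \<longleftrightarrow>
    (\<forall>i k. k \<notin> S \<longrightarrow> P$i$k = 0) \<and> (\<forall>i\<in>S. \<forall>k\<in>S. P$i$k = (if i = k then 1 else 0))"

lemma exists_minimal_coords_determine:
  "\<exists>S. coords_determine W S \<and> (\<forall>j\<in>S. \<not> coords_determine W (S - {j}))"
proof -
  have "coords_determine W UNIV"
    by (simp add: coords_determine_def vec_eq_iff)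
  then obtain S where S: "coords_determine W S"
    and least: "\<And>S'. coords_determine W S' \<Longrightarrow> card S \<le> card S'"
    using ex_has_least_nat [of "coords_determine W" UNIV card] by blast
  have "\<not> coords_determine W (S - {j})" if "j \<in> S" for j
    using least [of "S - {j}"] that by (meson card_Diff1_less finite not_le)
  with S show ?thesis by blast
qed

lemma coords_determine_unit_vector:
  fixes W :: "('a::field^'n) set"
  assumes W: "vec.subspace W" and S: "coords_determine W S"
    and not_j: "\<not> coords_determine W (S - {j})" and j: "j \<in> S"
  shows "\<exists>w\<in>W. \<forall>k\<in>S. w$k = (if k = j then 1 else 0)"
proof -
  obtain x where x: "x \<in> W" "\<forall>k\<in>S - {j}. x$k = 0" "x \<noteq> 0"
    using not_j unfolding coords_determine_def by blast
  have "x$j \<noteq> 0"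
    using S x unfolding coords_determine_def by (metis Diff_iff singletonD)
  then show ?thesis
    using x W by (intro bexI [of _ "(1 / x$j) *s x"]) (auto simp: vec.subspace_scale)
qed

lemma projection_from_unit_vectors:
  fixes W :: "('a::field^'n) set"
  assumes W: "vec.subspace W" and S: "coords_determine W S"
    and w: "\<forall>j\<in>S. w j \<in> W \<and> (\<forall>k\<in>S. w j $ k = (if k = j then 1 else 0))"
  defines "P \<equiv> \<chi> i k. if k \<in> S then w k $ i else 0"
  shows "projection_onto P W" "projection_along_coords S P"
proof -
  have Pv: "P *v x = (\<Sum>k\<in>S. x$k *s w k)" for x
    unfolding vec_eq_iff
    by (auto simp: P_def matrix_vector_mult_def sum_component mult.commute
        intro!: sum.mono_neutral_cong_right)
  have range: "P *v x \<in> W" for x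
    unfolding Pv using W w by (simp add: vec.subspace_sum vec.subspace_scale)
  have "P *v v = v" if "v \<in> W" for v
  proof -
    have "(P *v v - v)$j = 0" if "j \<in> S" for j
      using w that by (simp add: Pv sum_component if_distrib [of "\<lambda>a. _ * a"] cong: if_cong)
    moreover have "P *v v - v \<in> W"
      using W range \<open>v \<in> W\<close> by (simp add: vec.subspace_diff)
    ultimately show ?thesis
      using S unfolding coords_determine_def by auto
  qed
  with range show "projection_onto P W"
    by (simp add: projection_onto_def)
  show "projection_along_coords S P"
    using w by (simp add: projection_along_coords_def P_def)
qed

lemma exists_projection_along_coords:
  fixes W :: "('a::field^'n) set"
  assumes W: "vec.subspace W" and "W \<noteq> {0}" "W \<noteq> UNIV"
  shows "\<exists>S P. S \<noteq> {} \<and> S \<noteq> UNIV \<and> projection_onto P W \<and> projection_along_coords S P"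
proof -
  obtain S where S: "coords_determine W S" "\<forall>j\<in>S. \<not> coords_determine W (S - {j})"
    using exists_minimal_coords_determine by blast
  then have "\<forall>j\<in>S. \<exists>w\<in>W. \<forall>k\<in>S. w$k = (if k = j then 1 else 0)"
    using coords_determine_unit_vector [OF W] by blast
  then obtain w where "\<forall>j\<in>S. w j \<in> W \<and> (\<forall>k\<in>S. w j $ k = (if k = j then 1 else 0))"
    by metis
  then obtain P where P: "projection_onto P W" "projection_along_coords S P"
    using projection_from_unit_vectors [OF W S(1)] by blast
  have "S \<noteq> {}"
    using S(1) W assms(2) by (auto simp: coords_determine_def vec.subspace_0)
  moreover have "S \<noteq> UNIV"
  proof
    assume "S = UNIV"
    then have "P = mat 1"
      using P(2) by (simp add: projection_along_coords_def mat_def vec_eq_iff)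
    then show False
      using P(1) assms(3) by (auto simp: projection_onto_def)
  qed
  ultimately show ?thesis
    using P by blast
qed

lemma det_offdiagonal_in_block:
  fixes M :: "'a::comm_ring_1^'n^'n"
  assumes block: "\<And>i k. i \<noteq> k \<Longrightarrow> M$i$k \<noteq> 0 \<Longrightarrow> i \<notin> S \<and> k \<in> S"
  shows "det M = (\<Prod>i\<in>UNIV. M$i$i)"
proof -
  have "(\<Prod>i\<in>UNIV. M$i$p i) = 0" if p: "p permutes UNIV" "p \<noteq> id" for p
  proof -
    obtain i where i: "p i \<noteq> i" using p(2) by (auto simp: fun_eq_iff)
    \<comment> \<open>a nonzero entry at \<open>(i, p i)\<close> forces \<open>p i \<in> S\<close>, and rows in \<open>S\<close> vanish off the diagonal\<close>
    have "M$(p i)$p (p i) = 0 \<or> M$i$p i = 0"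
    proof (rule disjCI)
      assume "M$i$p i \<noteq> 0"
      then have "p i \<in> S" using block [OF not_sym [OF i]] by blast
      moreover have "p (p i) \<noteq> p i" using i permutes_inj [OF p(1)] by (simp add: inj_eq)
      ultimately show "M$(p i)$p (p i) = 0" using block [of "p i" "p (p i)"] by auto
    qed
    then show ?thesis by (metis UNIV_I finite prod_zero)
  qed
  then have "det M = (\<Sum>p\<in>{id}. of_int (sign p) * (\<Prod>i\<in>UNIV. M$i$p i))"
    unfolding det_def by (intro sum.mono_neutral_right) (auto simp: permutes_id)
  then show ?thesis by (simp add: sign_id)
qed

lemma restricted_det_diag_mat:
  fixes d :: "'n::finite \<Rightarrow> 'a::comm_ring_1"
  assumes P: "projection_along_coords S P"
  shows "restricted_det P (diag_mat d) = (\<Prod>i\<in>S. d i)"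
proof -
  define M where "M = diag_mat d ** P + mat 1 - P"
  have M: "M$i$k = d i * P$i$k + (if i = k then 1 else 0) - P$i$k" for i k
    by (simp add: M_def diag_mat_def matrix_matrix_mult_def mat_def if_distrib [of "\<lambda>a. a * _"]
        sum.delta cong: if_cong)
  have "det M = (\<Prod>i\<in>UNIV. M$i$i)"
  proof (rule det_offdiagonal_in_block)
    fix i k assume "i \<noteq> k" "M$i$k \<noteq> 0"
    then have "P$i$k \<noteq> 0" by (auto simp: M)
    then show "i \<notin> S \<and> k \<in> S"
      using P \<open>i \<noteq> k\<close> unfolding projection_along_coords_def by force
  qed
  also have "\<dots> = (\<Prod>i\<in>UNIV. if i \<in> S then d i else 1)"
    using P by (intro prod.cong) (auto simp: M projection_along_coords_def)
  also have "\<dots> = (\<Prod>i\<in>S. d i)"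
    by (simp add: prod.If_cases)
  finally show ?thesis
    unfolding M_def restricted_det_def .
qed

section \<open>Reducible representations and partial sums\<close>

lemma partial_prod_eq_1_if_reducible_diag:
  assumes "is_rep g A B" "reducible_rep g A B" "prod_commutators g A B = diag_mat d"
  shows "\<exists>S. S \<noteq> {} \<and> S \<noteq> UNIV \<and> (\<Prod>i\<in>S. d i) = 1"
proof -
  obtain V where V: "vec.subspace V" "V \<noteq> {0}" "V \<noteq> UNIV"
    and invariant: "\<forall>i<g. preserves (A i) V \<and> preserves (B i) V"
    using assms(2) unfolding reducible_rep_def preserves_def complex_subspace_iff_subspace by blast
  obtain S P where S: "S \<noteq> {}" "S \<noteq> UNIV"
    and P: "projection_onto P V" "projection_along_coords S P"
    using exists_projection_along_coords [OF V] by blast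
  have "restricted_det P (prod_commutators g A B) = 1"
    using restricted_det_prod_commutators [OF V(1) P(1)] assms(1) invariant
    unfolding is_rep_def by blast
  then have "(\<Prod>i\<in>S. d i) = 1"
    using assms(3) restricted_det_diag_mat [OF P(2)] by simp
  with S show ?thesis by blast
qed

lemma partial_sum_in_Ints_if_reducible:
  assumes rep: "is_rep g A B" "reducible_rep g A B"
    and "unitarily_conjugate \<gamma> (prod_commutators g A B)" "unitarily_conjugate \<gamma> (diag_exp t)"
  shows "\<exists>S. S \<noteq> {} \<and> S \<noteq> UNIV \<and> (\<Sum>j\<in>S. t j) \<in> \<int>"
proof -
  obtain R where R: "unitary_mat R" "diag_exp t = R ** prod_commutators g A B ** adjoint_mat R"
    using unitarily_conjugate_common [OF assms(3,4)] by blast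
  have "prod_commutators g (\<lambda>i. R ** A i ** adjoint_mat R) (\<lambda>i. R ** B i ** adjoint_mat R)
      = diag_mat (\<lambda>j. cis (2 * pi * t j))"
    using R by (simp add: prod_commutators_unitary_conj diag_exp_eq_diag_mat)
  then obtain S where S: "S \<noteq> {}" "S \<noteq> UNIV" "(\<Prod>j\<in>S. cis (2 * pi * t j)) = 1"
    using partial_prod_eq_1_if_reducible_diag
      [OF is_rep_unitary_conj [OF R(1) rep(1)] reducible_rep_unitary_conj [OF R(1) rep(2)]]
    by blast
  then have "cis (2 * pi * (\<Sum>j\<in>S. t j)) = 1"
    by (simp add: prod_cis sum_distrib_left)
  with S(1,2) show ?thesis
    by (auto simp: cis_2pi_eq_1_iff)
qed

lemma exists_cycle_coboundary_mod_Ints: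
  fixes t :: "'a \<Rightarrow> real"
  assumes "finite T" and sum_T: "(\<Sum>j\<in>T. t j) \<in> \<int>"
  shows "\<exists>p \<alpha>. p permutes T \<and> (\<forall>j\<in>T. \<alpha> j - \<alpha> (p j) - t j \<in> \<int>)"
proof -
  obtain cs where cs: "distinct cs" "set cs = T"
    using finite_distinct_list [OF assms(1)] by blast
  \<comment> \<open>\<open>\<alpha>\<close> is minus the partial sum of \<open>t\<close> along \<open>cs\<close>; only the step from the last entry
    back to the first picks up an error, namely the full sum\<close>
  define m where "m = length cs"
  define f where "f l = - (\<Sum>i<l. t (cs ! i))" for l
  define \<alpha> where "\<alpha> = f \<circ> the_inv_into {..<m} ((!) cs)"
  have \<alpha>_nth: "\<alpha> (cs ! l) = f l" if "l < m" for l
    using that cs(1) by (simp add: \<alpha>_def m_def the_inv_into_f_f inj_on_nth)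
  have "map (cycle_of_list cs) cs = rotate1 cs"
    using cyclic_rotation [OF cs(1), of 1] by simp
  then have cycle_nth: "cycle_of_list cs (cs ! l) = cs ! (Suc l mod m)" if "l < m" for l
    using that by (metis m_def nth_map nth_rotate1)
  have "\<alpha> j - \<alpha> (cycle_of_list cs j) - t j \<in> \<int>" if j: "j \<in> T" for j
  proof -
    obtain l where l: "l < m" "j = cs ! l"
      using j cs(2) by (auto simp: in_set_conv_nth m_def)
    show ?thesis
    proof (cases "Suc l < m")
      case True
      then show ?thesis
        using l by (simp add: \<alpha>_nth cycle_nth f_def)
    next
      case False
      then have m: "m = Suc l" using l(1) by simp
      have "\<alpha> j - \<alpha> (cycle_of_list cs j) - t j = f l - f 0 - t (cs ! l)"
        using l m by (simp add: \<alpha>_nth cycle_nth)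
      also have "\<dots> = - (\<Sum>i<m. t (cs ! i))"
        by (simp add: f_def m)
      also have "\<dots> = - sum_list (map t cs)"
        by (simp add: sum_list_sum_nth m_def atLeast0LessThan)
      also have "\<dots> = - (\<Sum>j\<in>T. t j)"
        using cs by (simp add: sum_list_distinct_conv_sum_set)
      finally show ?thesis
        using sum_T by simp
    qed
  qed
  then show ?thesis
    using cycle_permutes [of cs] cs(2) by blast
qed

lemma diag_exp_eq_commutator_diag_perm_mat:
  assumes "(\<Sum>j\<in>S. t j) \<in> \<int>" "(\<Sum>j\<in>-S. t j) \<in> \<int>"
  shows "\<exists>d p. (\<forall>i. norm (d i) = 1) \<and> bij p \<and> (\<forall>i. p i \<in> S \<longleftrightarrow> i \<in> S)
    \<and> commutator_mat (diag_mat d) (perm_mat p) = diag_exp t"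
proof -
  obtain p1 \<alpha>1 where p1: "p1 permutes S" and \<alpha>1: "\<forall>j\<in>S. \<alpha>1 j - \<alpha>1 (p1 j) - t j \<in> \<int>"
    using exists_cycle_coboundary_mod_Ints [OF finite assms(1)] by blast
  obtain p2 \<alpha>2 where p2: "p2 permutes -S" and \<alpha>2: "\<forall>j\<in>-S. \<alpha>2 j - \<alpha>2 (p2 j) - t j \<in> \<int>"
    using exists_cycle_coboundary_mod_Ints [OF finite assms(2)] by blast
  define p where "p = p1 \<circ> p2"
  define \<alpha> where "\<alpha> j = (if j \<in> S then \<alpha>1 j else \<alpha>2 j)" for j
  define d where "d j = cis (2 * pi * \<alpha> j)" for j
  have p_S: "p j = p1 j" "p j \<in> S" if "j \<in> S" for j
    using that p1 p2 by (auto simp: p_def permutes_not_in permutes_in_image)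
  have p_not_S: "p j = p2 j" "p j \<notin> S" if "j \<notin> S" for j
  proof -
    have "p2 j \<notin> S"
      using permutes_in_image [OF p2, of j] that by simp
    then show "p j = p2 j" "p j \<notin> S"
      using p1 by (simp_all add: p_def permutes_not_in)
  qed
  have "bij p"
    using p1 p2 unfolding p_def
    by (meson permutes_bij permutes_compose permutes_subset subset_UNIV)
  moreover have p_preserves_S: "p i \<in> S \<longleftrightarrow> i \<in> S" for i
    using p_S p_not_S by blast
  moreover have "d i * cnj (d (p i)) = cis (2 * pi * t i)" for i
  proof -
    have "\<alpha> i - \<alpha> (p i) - t i \<in> \<int>"
      using \<alpha>1 \<alpha>2 p_S p_not_S by (cases "i \<in> S") (auto simp: \<alpha>_def)
    then have "cis (2 * pi * (\<alpha> i - \<alpha> (p i))) = cis (2 * pi * t i)"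
      by (intro cis_2pi_eq_if_diff_in_Ints) (simp add: algebra_simps)
    then show ?thesis
      by (simp add: d_def cis_cnj cis_mult right_diff_distrib)
  qed
  ultimately show ?thesis
    by (intro exI [of _ d] exI [of _ p])
      (simp add: d_def commutator_diag_perm_mat diag_exp_eq_diag_mat)
qed

definition coord_subspace :: "'n set \<Rightarrow> ('a::zero^'n) set" where
  "coord_subspace S = {x. \<forall>j. j \<notin> S \<longrightarrow> x$j = 0}"

lemma reducible_coord_subspace:
  assumes "S \<noteq> {}" "S \<noteq> UNIV"
  shows "complex_subspace (coord_subspace S :: (complex^'n) set)"
    and "coord_subspace S \<noteq> ({0} :: (complex^'n) set)"
    and "coord_subspace S \<noteq> (UNIV :: (complex^'n) set)"
proof -
  show "complex_subspace (coord_subspace S :: (complex^'n) set)"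
    by (simp add: complex_subspace_def coord_subspace_def)
  obtain j k where "j \<in> S" "k \<notin> S" using assms by blast
  then have "axis j 1 \<in> (coord_subspace S :: (complex^'n) set)" "axis j (1 :: complex) \<noteq> 0"
    and "axis k 1 \<notin> (coord_subspace S :: (complex^'n) set)"
    by (auto simp: coord_subspace_def axis_def vec_eq_iff)
  then show "coord_subspace S \<noteq> ({0} :: (complex^'n) set)" "coord_subspace S \<noteq> (UNIV :: (complex^'n) set)"
    by blast+
qed

lemma prod_commutators_first_handle:
  "prod_commutators (Suc k) (\<lambda>n. if n = 0 then A else mat 1) (\<lambda>n. if n = 0 then B else mat 1)
    = commutator_mat A B"
  by (induction k) (simp_all add: commutator_mat_def)

lemma exists_reducible_rep_prod_commutators_eq_diag_exp:
  fixes t :: "'n::finite \<Rightarrow> real"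
  assumes "g \<ge> 1" "S \<noteq> {}" "S \<noteq> UNIV" "(\<Sum>j\<in>S. t j) \<in> \<int>" "(\<Sum>j\<in>-S. t j) \<in> \<int>"
  shows "\<exists>A B. is_rep g A B \<and> reducible_rep g A B \<and> prod_commutators g A B = diag_exp t"
proof -
  obtain d p where d: "\<forall>i. norm (d i) = 1" and p: "bij p" "\<forall>i. p i \<in> S \<longleftrightarrow> i \<in> S"
    and comm: "commutator_mat (diag_mat d) (perm_mat p) = diag_exp t"
    using diag_exp_eq_commutator_diag_perm_mat [OF assms(4,5)] by blast
  define A :: "nat \<Rightarrow> complex^'n^'n" where "A n = (if n = 0 then diag_mat d else mat 1)" for n
  define B :: "nat \<Rightarrow> complex^'n^'n" where "B n = (if n = 0 then perm_mat p else mat 1)" for n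
  have "is_rep g A B"
    using d p by (simp add: is_rep_def A_def B_def unitary_diag_mat unitary_perm_mat unitary_mat_one)
  moreover have "reducible_rep g A B"
    unfolding reducible_rep_def using reducible_coord_subspace [OF assms(2,3)] p(2)
    by (intro exI [of _ "coord_subspace S"])
      (auto simp: A_def B_def coord_subspace_def diag_mat_mult_vec perm_mat_mult_vec)
  moreover have "prod_commutators g A B = diag_exp t"
    using assms(1) comm prod_commutators_first_handle unfolding A_def B_def
    by (metis Suc_pred' less_eq_Suc_le One_nat_def)
  ultimately show ?thesis by blast
qed

lemma reducible_rep_if_partial_sum_in_Ints:
  fixes t :: "'n::finite \<Rightarrow> real"
  assumes "g \<ge> 1" "special_unitary_mat \<gamma>" "unitarily_conjugate \<gamma> (diag_exp t)"
    and S: "S \<noteq> {}" "S \<noteq> UNIV" "(\<Sum>j\<in>S. t j) \<in> \<int>"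
  shows "\<exists>A B. is_rep g A B \<and> reducible_rep g A B \<and> unitarily_conjugate \<gamma> (prod_commutators g A B)"
proof -
  have "(\<Sum>j\<in>-S. t j) = (\<Sum>j\<in>UNIV. t j) - (\<Sum>j\<in>S. t j)"
    by (simp add: Compl_eq_Diff_UNIV sum_diff)
  then have "(\<Sum>j\<in>-S. t j) \<in> \<int>"
    using sum_in_Ints_if_special_unitary_conj_diag_exp [OF assms(2,3)] S(3) by simp
  then obtain A B where "is_rep g A B" "reducible_rep g A B" "prod_commutators g A B = diag_exp t"
    using exists_reducible_rep_prod_commutators_eq_diag_exp [OF assms(1) S] by blast
  with assms(3) show ?thesis
    by (intro exI [of _ A] exI [of _ B]) simp
qed

theorem mainTheorem4:
  fixes g :: nat and \<gamma> :: "complex^'n^'n" and t :: "'n \<Rightarrow> real"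
  assumes "g \<ge> 1"
    and "special_unitary_mat \<gamma>"
    and "\<forall>j. 0 \<le> t j \<and> t j < 1"
    and "unitarily_conjugate \<gamma> (diag_exp t)"
  shows "(\<exists>A B. is_rep g A B \<and> reducible_rep g A B \<and>
              unitarily_conjugate \<gamma> (prod_commutators g A B))
         \<longleftrightarrow> (\<exists>S :: 'n set. S \<noteq> {} \<and> S \<noteq> UNIV \<and> (\<Sum>j\<in>S. t j) \<in> \<int>)"
proof
  assume "\<exists>A B. is_rep g A B \<and> reducible_rep g A B \<and> unitarily_conjugate \<gamma> (prod_commutators g A B)"
  then obtain A B where "is_rep g A B" "reducible_rep g A B"
    and "unitarily_conjugate \<gamma> (prod_commutators g A B)"
    by blast
  from partial_sum_in_Ints_if_reducible [OF this assms(4)]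
  show "\<exists>S :: 'n set. S \<noteq> {} \<and> S \<noteq> UNIV \<and> (\<Sum>j\<in>S. t j) \<in> \<int>" .
next
  assume "\<exists>S :: 'n set. S \<noteq> {} \<and> S \<noteq> UNIV \<and> (\<Sum>j\<in>S. t j) \<in> \<int>"
  then obtain S :: "'n set" where "S \<noteq> {}" "S \<noteq> UNIV" "(\<Sum>j\<in>S. t j) \<in> \<int>"
    by blast
  from reducible_rep_if_partial_sum_in_Ints [OF assms(1,2,4) this]
  show "\<exists>A B. is_rep g A B \<and> reducible_rep g A B
      \<and> unitarily_conjugate \<gamma> (prod_commutators g A B)" .
qed

end
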